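(* Let $r,s\in(0,1)$ satisfy \[s = 2r(1-r)\qquad\text{and}\qquad r = 3s(1-s)^2 + 3s^2(1-s).\] Then the number $\beta = 1/r - 1$ is not an algebraic integer.
   Context: An algebraic integer is a complex number that is a root of a monic polynomial with integer coefficients. *)

theory Defs
  imports "HOL-Computational_Algebra.Polynomial"
begin

end

theory Submission
  imports Defs "HOL-Computational_Algebra.Polynomial_Factorial" "HOL-Computational_Algebra.Field_as_Ring"
begin

text \<open>
  Eliminating s shows that \<open>\<beta> = 1/r - 1\<close> is a root of \<open>5x\<^sup>3 - 3x\<^sup>2 + 3x - 1\<close>, which is
  equivalent to \<open>(1/\<beta> - 1)\<^sup>3 = 4\<close>; as 4 is not the cube of a rational, this cubic has no
  rational root and is irreducible over \<open>\<rat>\<close>. Hence it divides, over \<open>\<rat>\<close>, every monic integer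
  polynomial vanishing at \<open>\<beta>\<close>. Because its constant coefficient is a unit, the quotient has
  integer coefficients, and comparing leading coefficients would make 5 a unit in \<open>\<int>\<close>.
\<close>

lemma map_poly_of_rat_add:
  "map_poly (of_rat :: rat \<Rightarrow> 'a::field_char_0) (p + q) = map_poly of_rat p + map_poly of_rat q"
  by (simp add: poly_eq_iff coeff_map_poly of_rat_add)

lemma map_poly_of_rat_mult:
  "map_poly (of_rat :: rat \<Rightarrow> 'a::field_char_0) (p * q) = map_poly of_rat p * map_poly of_rat q"
  by (simp add: poly_eq_iff coeff_map_poly coeff_mult of_rat_sum of_rat_mult)

lemma irreducible_field_poly_if_no_roots:
  fixes Q :: "'a::field poly"
  assumes "0 < degree Q" and "degree Q \<le> 3" and no_root: "\<And>y. poly Q y \<noteq> 0"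
  shows "irreducible Q"
proof (rule irreducibleI)
  show "Q \<noteq> 0"
    using assms(1) by auto
  then show "\<not> is_unit Q"
    using assms(1) by (simp add: is_unit_iff_degree)
  fix a b assume Q_eq: "Q = a * b"
  have linear_factor_has_root: "\<exists>y. poly Q y = 0" if "f dvd Q" "degree f = 1" for f
  proof -
    obtain u v where "f = [:v, u:]" "u \<noteq> 0"
      using degree1_coeffs[OF \<open>degree f = 1\<close>] .
    then have "poly f (- v / u) = 0" by simp
    with \<open>f dvd Q\<close> have "poly Q (- v / u) = 0" by (auto simp: dvd_def)
    then show ?thesis ..
  qed
  have "a \<noteq> 0" "b \<noteq> 0" using \<open>Q \<noteq> 0\<close> Q_eq by auto
  then have "degree a + degree b \<le> 3"
    using assms(2) Q_eq by (simp add: degree_mult_eq)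
  moreover have "degree a \<noteq> 1" "degree b \<noteq> 1"
    using linear_factor_has_root[of a] linear_factor_has_root[of b] no_root Q_eq by auto
  ultimately have "degree a = 0 \<or> degree b = 0" by linarith
  with \<open>a \<noteq> 0\<close> \<open>b \<noteq> 0\<close> show "is_unit a \<or> is_unit b"
    by (auto simp: is_unit_iff_degree)
qed

lemma irreducible_rat_poly_dvd_if_common_root:
  fixes Q P :: "rat poly" and x :: "'a::field_char_0"
  assumes "irreducible Q"
    and "poly (map_poly of_rat Q) x = 0" and "poly (map_poly of_rat P) x = 0"
  shows "Q dvd P"
proof -
  define g where "g = gcd Q P"
  have "g = fst (bezout_coefficients Q P) * Q + snd (bezout_coefficients Q P) * P"
    unfolding g_def by (simp add: bezout_coefficients_fst_snd)
  then have "poly (map_poly of_rat g) x = 0"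
    using assms(2,3) by (simp add: map_poly_of_rat_add map_poly_of_rat_mult)
  then have "\<not> is_unit g"
    by (auto simp: is_unit_poly_iff map_poly_pCons)
  moreover have "g dvd Q" by (simp add: g_def)
  ultimately have "Q dvd g"
    using irreducibleD'[OF assms(1)] by blast
  then show ?thesis
    using dvd_trans g_def by auto
qed

lemma Ints_coeff_factor_if_unit_constant_coeff:
  fixes Q H :: "'a::comm_ring_1 poly"
  assumes Q_Ints: "\<And>i. coeff Q i \<in> \<int>" and QH_Ints: "\<And>i. coeff (Q * H) i \<in> \<int>"
    and unit: "coeff Q 0 \<in> {1, -1}"
  shows "coeff H n \<in> \<int>"
proof (induction n rule: less_induct)
  case (less n)
  define c where "c = coeff Q 0"
  define rest where "rest = (\<Sum>i\<in>{..n} - {0}. coeff Q i * coeff H (n - i))"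
  have "rest \<in> \<int>"
    unfolding rest_def using Q_Ints less by (intro Ints_sum Ints_mult) auto
  have "coeff (Q * H) n = c * coeff H n + rest"
    unfolding coeff_mult rest_def c_def by (subst sum.remove[of _ 0]) auto
  moreover have "c * c = 1" using unit by (auto simp: c_def)
  ultimately have "coeff H n = c * (coeff (Q * H) n - rest)"
    by (simp add: algebra_simps flip: mult.assoc)
  then show ?case
    using QH_Ints \<open>rest \<in> \<int>\<close> unit by (auto simp: c_def)
qed

lemma not_algebraic_int_if_root_of_irreducible:
  fixes Q :: "int poly" and x :: "'a::field_char_0"
  assumes irred: "irreducible (map_poly of_int Q :: rat poly)"
    and root: "poly (map_poly of_int Q) x = 0"
    and const: "coeff Q 0 \<in> {1, -1}" and lead: "lead_coeff Q \<notin> {1, -1}"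
  shows "\<not> algebraic_int x"
proof
  \<comment> \<open>Gauss's lemma, in the easy case where the divisor has a unit constant coefficient\<close>
  assume "algebraic_int x"
  then obtain p :: "int poly" where p: "poly (map_poly of_int p) x = 0" "lead_coeff p = 1"
    by (auto simp: algebraic_int_altdef_ipoly)
  define Q' P' :: "rat poly" where "Q' = map_poly of_int Q" and "P' = map_poly of_int p"
  have via_rat: "map_poly of_rat (map_poly of_int f) = (map_poly of_int f :: 'a poly)" for f
    by (simp add: map_poly_map_poly o_def)
  have "Q' dvd P'"
    unfolding Q'_def P'_def
    by (rule irreducible_rat_poly_dvd_if_common_root[OF irred, of x]) (simp_all add: via_rat root p(1))
  then obtain H where P'_eq: "P' = Q' * H" by (elim dvdE)
  have H_Ints: "coeff H n \<in> \<int>" for n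
  proof (rule Ints_coeff_factor_if_unit_constant_coeff)
    show "coeff Q' i \<in> \<int>" for i
      by (simp add: Q'_def coeff_map_poly)
    show "coeff (Q' * H) i \<in> \<int>" for i
      by (simp add: P'_def coeff_map_poly flip: P'_eq)
    show "coeff Q' 0 \<in> {1, -1}"
      using const by (auto simp: Q'_def coeff_map_poly)
  qed
  obtain m where m: "lead_coeff H = of_int m"
    using H_Ints[of "degree H"] by (elim Ints_cases)
  have "1 = lead_coeff P'"
    using p(2) by (simp add: P'_def degree_map_poly coeff_map_poly)
  also have "\<dots> = lead_coeff Q' * lead_coeff H"
    by (simp add: P'_eq lead_coeff_mult)
  also have "\<dots> = of_int (lead_coeff Q * m)"
    by (simp add: Q'_def m degree_map_poly coeff_map_poly)
  finally have "lead_coeff Q * m = 1" by (simp del: of_int_mult)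
  with lead show False by (auto simp: zmult_eq_1_iff)
qed

lemma rat_cube_neq_4: "(k::rat) ^ 3 \<noteq> 4"
proof
  assume cube: "k ^ 3 = 4"
  have "poly (map_poly of_int [:-4, 0, 0, 1:]) k = k ^ 3 - 4"
    by (simp add: map_poly_pCons algebra_simps power3_eq_cube)
  then have "algebraic_int k"
    unfolding algebraic_int_altdef_ipoly using cube by (intro exI[of _ "[:-4, 0, 0, 1:]"]) simp
  then obtain m where "k = of_int m"
    using rational_algebraic_int_is_int[of k] by (auto simp: Rats_def elim: Ints_cases)
  with cube have "m ^ 3 = 4"
    by (metis of_int_eq_iff of_int_numeral of_int_power)
  then obtain t where "m = 2 * t"
    by (metis even_numeral even_power evenE)
  with \<open>m ^ 3 = 4\<close> have "2 * t ^ 3 = 1"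
    by (simp add: power_mult_distrib)
  then show False by presburger
qed

lemma rat_cubic_no_root: "poly [:-1, 3, -3, 5:] (y::rat) \<noteq> 0"
proof
  assume root: "poly [:-1, 3, -3, 5:] y = 0"
  then have "y \<noteq> 0" by auto
  have "(1 / y - 1) ^ 3 = 4"
    using root \<open>y \<noteq> 0\<close> by (simp add: field_simps power3_eq_cube)
  with rat_cube_neq_4 show False by blast
qed

lemma cubic_root_of_fixed_point:
  fixes r s :: real
  assumes "r \<noteq> 0"
    and "s = 2 * r * (1 - r)"
    and "r = 3 * s * (1 - s)^2 + 3 * s^2 * (1 - s)"
  shows "poly [:-1, 3, -3, 5:] (1 / r - 1) = 0"
proof -
  have "r = 3 * s * (1 - s)"
    using assms(3) by (simp add: algebra_simps power2_eq_square)
  then have "r * (6 * (1 - r) * (1 - 2 * r * (1 - r)) - 1) = 0"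
    unfolding assms(2) by (simp add: algebra_simps)
  then have cubic_in_r: "6 * (1 - r) * (1 - 2 * r * (1 - r)) = 1"
    using assms(1) by simp
  have "poly [:-1, 3, -3, 5:] (1 / r - 1) * r ^ 3 = 6 * (1 - r) * (1 - 2 * r * (1 - r)) - 1"
    using assms(1) by (simp add: field_simps power3_eq_cube)
  then have "poly [:-1, 3, -3, 5:] (1 / r - 1) * r ^ 3 = 0"
    by (simp only: cubic_in_r diff_self)
  then show ?thesis
    using assms(1) by (metis mult_eq_0_iff power_not_zero)
qed

theorem mainTheorem2:
  fixes r s :: real
  assumes "0 < r" "r < 1" "0 < s" "s < 1"
    and "s = 2 * r * (1 - r)"
    and "r = 3 * s * (1 - s)^2 + 3 * s^2 * (1 - s)"
  shows "\<not> algebraic_int (complex_of_real (1 / r - 1))"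
proof -
  define Q :: "int poly" where "Q = [:-1, 3, -3, 5:]"
  have "irreducible (map_poly of_int Q :: rat poly)"
    by (rule irreducible_field_poly_if_no_roots)
      (use rat_cubic_no_root in \<open>simp_all add: Q_def map_poly_pCons\<close>)
  moreover have "poly (map_poly of_int Q) (1 / r - 1) = (0::real)"
    using cubic_root_of_fixed_point[OF _ assms(5,6)] assms(1) by (simp add: Q_def map_poly_pCons)
  ultimately have "\<not> algebraic_int (1 / r - 1)"
    by (rule not_algebraic_int_if_root_of_irreducible) (simp_all add: Q_def)
  then show ?thesis by (subst algebraic_int_of_real_iff)
qed

end
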